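(* Let $0<S<T$, let $\tilde\beta:[0,T]\to\mathbb{R}^d$, $\tilde B:[0,T]\to\mathbb{R}^{d\times d}$, $\tilde\sigma:[0,T]\to\mathbb{R}^{d\times d'}$ be continuous, $\tilde a=\tilde\sigma\tilde\sigma'$, $L_S\in\mathbb{R}^{m_S\times d}$, $L_T\in\mathbb{R}^{m_T\times d}$, and let $\Sigma_S,\Sigma_T$ be symmetric positive definite matrices of sizes $m_S$, $m_T$. With $\tilde L$, $\mu$, $\Upsilon$ as in the context, define $\tilde M^\dagger(t)=\int_t^T\tilde L(\tau)\tilde a(\tau)\tilde L(\tau)'\,\mathrm d\tau+\Upsilon(t)$. Then for $t\in(S,T]$, $$\frac{\mathrm d\tilde L(t)}{\mathrm dt}=-\tilde L(t)\tilde B(t),\ \tilde L(T)=L_T;\qquad \frac{\mathrm d\tilde M^\dagger(t)}{\mathrm dt}=-\tilde L(t)\tilde a(t)\tilde L(t)',\ \tilde M^\dagger(T)=\Sigma_T;\qquad \frac{\mathrm d\mu(t)}{\mathrm dt}=-\tilde L(t)\tilde\beta(t),\ \mu(T)=0.$$ For $t\in[0,S]$ the same three differential equations hold, and the values at $S$ are related to the right limits at $S$ by $$\tilde L(S)=\begin{bmatrix}L_S\\ \tilde L(S+)\end{bmatrix},\qquad \tilde M^\dagger(S)=\begin{bmatrix}\Sigma_S&0_{m_S\times m_T}\\ 0_{m_T\times m_S}&\tilde M^\dagger(S+)\end{bmatrix},\qquad \mu(S)=\begin{bmatrix}0_{m_S}\\ \mu(S+)\end{bmatrix}.$$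
   Context: Let $\Phi$ solve $\mathrm d\Phi(t)=\tilde B(t)\Phi(t)\,\mathrm dt$, $\Phi(0)=I$, and $\Phi(t,s)=\Phi(t)\Phi(s)^{-1}$. Define $\tilde L(t)=\begin{bmatrix}L_S\Phi(S,t)\mathbf 1_{[0,S]}(t)\\ L_T\Phi(T,t)\end{bmatrix}$ for $t\in[0,S]$ and $\tilde L(t)=L_T\Phi(T,t)$ for $t\in(S,T]$; $\Upsilon(t)=\operatorname{diag}(\Sigma_S,\Sigma_T)$ for $t\in[0,S]$ and $\Upsilon(t)=\Sigma_T$ for $t\in(S,T]$; $\mu(t)=\int_t^T\tilde L(\tau)\tilde\beta(\tau)\,\mathrm d\tau$. For $t\in[0,S]$, in the integrals defining $\mu(t)$ and $\tilde M^\dagger(t)$ the integrand $\tilde L(\tau)$ means the $(m_S+m_T)\times d$ matrix $\begin{bmatrix}L_S\Phi(S,\tau)\mathbf 1_{[0,S]}(\tau)\\ L_T\Phi(T,\tau)\end{bmatrix}$ for all $\tau\in[t,T]$. $f(S+)$ denotes the right limit $\lim_{t\downarrow S}f(t)$. *)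

theory Defs
  imports "HOL-Analysis.Analysis"
begin

definition vstack :: "'a::zero^'c^'m \<Rightarrow> 'a^'c^'n \<Rightarrow> 'a^'c^('m + 'n)" where
  "vstack A B = (\<chi> i. case i of Inl k \<Rightarrow> A $ k | Inr k \<Rightarrow> B $ k)"

definition vstack_vec :: "'a::zero^'m \<Rightarrow> 'a^'n \<Rightarrow> 'a^('m + 'n)" where
  "vstack_vec x y = (\<chi> i. case i of Inl k \<Rightarrow> x $ k | Inr k \<Rightarrow> y $ k)"

definition blockdiag :: "'a::zero^'m^'m \<Rightarrow> 'a^'n^'n \<Rightarrow> 'a^('m + 'n)^('m + 'n)" where
  "blockdiag A B = (\<chi> i j. case (i, j) of
       (Inl k, Inl l) \<Rightarrow> A $ k $ l
     | (Inr k, Inr l) \<Rightarrow> B $ k $ l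
     | _ \<Rightarrow> 0)"

definition sym_posdef :: "real^'n^'n \<Rightarrow> bool" where
  "sym_posdef A \<longleftrightarrow> transpose A = A \<and> (\<forall>x. x \<noteq> 0 \<longrightarrow> x \<bullet> (A *v x) > 0)"

definition trans_mat :: "(real \<Rightarrow> real^'d^'d) \<Rightarrow> real \<Rightarrow> real \<Rightarrow> real^'d^'d" where
  "trans_mat \<Phi> t s = \<Phi> t ** matrix_inv (\<Phi> s)"

text \<open>\<open>L~\<close> on \<open>(S,T]\<close> (and, as function of \<open>\<tau>\<close>, the integrand used there): \<open>L_T \<Phi>(T,t)\<close>.\<close>
definition Ltil_T :: "real^'d^'mT \<Rightarrow> (real \<Rightarrow> real^'d^'d) \<Rightarrow> real \<Rightarrow> real \<Rightarrow> real^'d^'mT" where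
  "Ltil_T LmT \<Phi> T t = LmT ** trans_mat \<Phi> T t"

definition Ltil_S :: "real^'d^'mS \<Rightarrow> real^'d^'mT \<Rightarrow> (real \<Rightarrow> real^'d^'d) \<Rightarrow> real \<Rightarrow> real \<Rightarrow> real
    \<Rightarrow> real^'d^('mS + 'mT)" where
  "Ltil_S LmS LmT \<Phi> S T t =
     vstack (indicator {0..S} t *\<^sub>R (LmS ** trans_mat \<Phi> S t)) (Ltil_T LmT \<Phi> T t)"

definition mu_T :: "real^'d^'mT \<Rightarrow> (real \<Rightarrow> real^'d^'d) \<Rightarrow> (real \<Rightarrow> real^'d) \<Rightarrow> real \<Rightarrow> real \<Rightarrow> real^'mT" where
  "mu_T LmT \<Phi> \<beta> T t = integral {t..T} (\<lambda>\<tau>. Ltil_T LmT \<Phi> T \<tau> *v \<beta> \<tau>)"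

definition mu_S :: "real^'d^'mS \<Rightarrow> real^'d^'mT \<Rightarrow> (real \<Rightarrow> real^'d^'d) \<Rightarrow> (real \<Rightarrow> real^'d)
    \<Rightarrow> real \<Rightarrow> real \<Rightarrow> real \<Rightarrow> real^('mS + 'mT)" where
  "mu_S LmS LmT \<Phi> \<beta> S T t = integral {t..T} (\<lambda>\<tau>. Ltil_S LmS LmT \<Phi> S T \<tau> *v \<beta> \<tau>)"

definition Mdag_T :: "real^'d^'mT \<Rightarrow> (real \<Rightarrow> real^'d^'d) \<Rightarrow> (real \<Rightarrow> real^'d^'d) \<Rightarrow> real^'mT^'mT
    \<Rightarrow> real \<Rightarrow> real \<Rightarrow> real^'mT^'mT" where
  "Mdag_T LmT \<Phi> a \<Sigma>T T t =
     integral {t..T} (\<lambda>\<tau>. Ltil_T LmT \<Phi> T \<tau> ** a \<tau> ** transpose (Ltil_T LmT \<Phi> T \<tau>)) + \<Sigma>T"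

definition Mdag_S :: "real^'d^'mS \<Rightarrow> real^'d^'mT \<Rightarrow> (real \<Rightarrow> real^'d^'d) \<Rightarrow> (real \<Rightarrow> real^'d^'d)
    \<Rightarrow> real^'mS^'mS \<Rightarrow> real^'mT^'mT \<Rightarrow> real \<Rightarrow> real \<Rightarrow> real \<Rightarrow> real^('mS + 'mT)^('mS + 'mT)" where
  "Mdag_S LmS LmT \<Phi> a \<Sigma>S \<Sigma>T S T t =
     integral {t..T} (\<lambda>\<tau>. Ltil_S LmS LmT \<Phi> S T \<tau> ** a \<tau> ** transpose (Ltil_S LmS LmT \<Phi> S T \<tau>))
     + blockdiag \<Sigma>S \<Sigma>T"

end

theory Submission
  imports Defs
begin

(* The fundamental matrix stays invertible on [0,T]: for y(t) = Phi(t) x the quantity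
   exp(2Kt) |y(t)|^2 is nondecreasing when |B(t) v| <= K |v|, so |Phi(t) x| >= exp(-KT) |x|.
   This uniform bound makes t -> Phi(t)^-1 continuous, and differentiating the identity
   Phi(s)^-1 - Phi(t)^-1 = - Phi(s)^-1 (Phi(s) - Phi(t)) Phi(t)^-1 gives
   (Phi^-1)' = - Phi^-1 B, hence the equation for L~.  The equations for Mdag and mu are the
   fundamental theorem of calculus for integrals with a variable lower limit.  On (S,T] the
   stacked integrands defining the quantities on [0,S] are zero-padded copies of the unstacked
   ones; the two differ at most at the single point S, which the integral does not see, and
   this produces the block structure of the values at S. *)

lemma bounded_bilinear_matrix_matrix_mult:
  "bounded_bilinear ((**) :: real^'n^'m \<Rightarrow> real^'p^'n \<Rightarrow> real^'p^'m)"
  unfolding bilinear_conv_bounded_bilinear[symmetric] bilinear_def linear_iff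
  by (auto simp: matrix_matrix_mult_def vec_eq_iff sum.distrib sum_distrib_left algebra_simps)

lemma bounded_bilinear_matrix_vector_mult:
  "bounded_bilinear ((*v) :: real^'n^'m \<Rightarrow> real^'n \<Rightarrow> real^'m)"
  unfolding bilinear_conv_bounded_bilinear[symmetric] bilinear_def linear_iff
  by (auto simp: matrix_vector_mult_def vec_eq_iff sum.distrib sum_distrib_left algebra_simps)

lemma bounded_linear_transpose: "bounded_linear (transpose :: real^'n^'m \<Rightarrow> real^'m^'n)"
  unfolding linear_conv_bounded_linear[symmetric] linear_iff
  by (auto simp: transpose_def vec_eq_iff)

lemmas continuous_on_matrix_mult [continuous_intros] =
  bounded_bilinear.continuous_on[OF bounded_bilinear_matrix_matrix_mult]
lemmas continuous_on_matrix_vector_mult [continuous_intros] =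
  bounded_bilinear.continuous_on[OF bounded_bilinear_matrix_vector_mult]
lemmas continuous_on_transpose [continuous_intros] =
  bounded_linear.continuous_on[OF bounded_linear_transpose]

lemma has_vector_derivative_iff_difference_quotient:
  fixes f :: "real \<Rightarrow> 'a::real_normed_vector"
  shows "(f has_vector_derivative f') (at x within X) \<longleftrightarrow>
    ((\<lambda>y. (f y - f x) /\<^sub>R (y - x)) \<longlongrightarrow> f') (at x within X)"
proof -
  let ?q = "\<lambda>y. (f y - f x) /\<^sub>R (y - x)"
  let ?r = "\<lambda>y. (1 / norm (y - x)) *\<^sub>R (f y - (f x + (y - x) *\<^sub>R f'))"
  have "?q y - f' = (f y - (f x + (y - x) *\<^sub>R f')) /\<^sub>R (y - x)" if "y \<noteq> x" for y
    using that by (simp add: diff_diff_eq[symmetric] scaleR_diff_right)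
  then have ev: "\<forall>\<^sub>F y in at x within X. norm (?q y - f') = norm (?r y)"
    by (auto simp: eventually_at_filter divide_inverse_commute)
  have "(?q \<longlongrightarrow> f') (at x within X) \<longleftrightarrow> ((\<lambda>y. ?q y - f') \<longlongrightarrow> 0) (at x within X)"
    by (rule Lim_null)
  also have "\<dots> \<longleftrightarrow> ((\<lambda>y. norm (?q y - f')) \<longlongrightarrow> 0) (at x within X)"
    by (rule tendsto_norm_zero_iff[symmetric])
  also have "\<dots> \<longleftrightarrow> ((\<lambda>y. norm (?r y)) \<longlongrightarrow> 0) (at x within X)"
    by (rule tendsto_cong[OF ev])
  also have "\<dots> \<longleftrightarrow> (?r \<longlongrightarrow> 0) (at x within X)"
    by (rule tendsto_norm_zero_iff)
  finally show ?thesis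
    by (simp add: has_vector_derivative_def has_derivative_within bounded_linear_scaleR_left)
qed

lemma compact_continuous_matrix_bound:
  fixes B :: "'a::topological_space \<Rightarrow> real^'n^'m"
  assumes "compact X" and "continuous_on X B"
  obtains K where "\<And>t v. t \<in> X \<Longrightarrow> norm (B t *v v) \<le> K * norm v"
proof -
  let ?f = "\<lambda>t. \<Sum>i\<in>UNIV. \<Sum>j\<in>UNIV. \<bar>B t $ i $ j\<bar>"
  have "bounded (?f ` X)"
    by (intro compact_imp_bounded compact_continuous_image continuous_intros assms)
  then obtain K where K: "\<And>t. t \<in> X \<Longrightarrow> norm (?f t) \<le> K"
    by (auto simp: bounded_iff)
  show ?thesis
  proof (rule that)
    fix t v assume t: "t \<in> X"
    have "norm (B t *v v) \<le> onorm ((*v) (B t)) * norm v"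
      by (rule onorm) simp
    also have "\<dots> \<le> ?f t * norm v"
      by (intro mult_right_mono onorm_le_matrix_component_sum) auto
    also have "\<dots> \<le> K * norm v"
      using K[OF t] by (intro mult_right_mono) auto
    finally show "norm (B t *v v) \<le> K * norm v" .
  qed
qed

lemma linear_growth_norm_lower_bound:
  fixes y y' :: "real \<Rightarrow> 'a::real_inner"
  assumes deriv: "\<And>s. s \<in> {0..t} \<Longrightarrow> (y has_vector_derivative y' s) (at s within {0..t})"
    and growth: "\<And>s. s \<in> {0..t} \<Longrightarrow> norm (y' s) \<le> K * norm (y s)"
    and "0 \<le> t"
  shows "exp (- K * t) * norm (y 0) \<le> norm (y t)"
proof -
  define g where "g s = exp (2 * K * s) * (y s \<bullet> y s)" for s
  define g' where "g' s = exp (2 * K * s) * (2 * K * (y s \<bullet> y s) + 2 * (y s \<bullet> y' s))" for s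
  have g_deriv: "(g has_derivative (\<lambda>h. g' s * h)) (at s within {0..t})" if "s \<in> {0..t}" for s
  proof -
    have "((\<lambda>s. y s \<bullet> y s) has_vector_derivative (y s \<bullet> y' s + y' s \<bullet> y s)) (at s within {0..t})"
      using bounded_bilinear.has_vector_derivative[OF bounded_bilinear_inner deriv[OF that] deriv[OF that]] .
    then have "((\<lambda>s. y s \<bullet> y s) has_field_derivative 2 * (y s \<bullet> y' s)) (at s within {0..t})"
      by (simp add: has_real_derivative_iff_has_vector_derivative inner_commute)
    then have "(g has_field_derivative g' s) (at s within {0..t})"
      unfolding g_def g'_def by (auto intro!: derivative_eq_intros simp: algebra_simps)
    then show ?thesis
      by (simp add: has_field_derivative_def)
  qed
  have g'_nonneg: "0 \<le> g' s" if "s \<in> {0..t}" for s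
  proof -
    have "\<bar>y s \<bullet> y' s\<bar> \<le> norm (y s) * norm (y' s)"
      by (rule Cauchy_Schwarz_ineq2)
    also have "\<dots> \<le> K * (y s \<bullet> y s)"
      using growth[OF that] mult_left_mono[OF growth[OF that], of "norm (y s)"]
      by (simp add: power2_norm_eq_inner[symmetric] power2_eq_square mult_ac)
    finally show ?thesis
      unfolding g'_def by (intro mult_nonneg_nonneg) auto
  qed
  obtain \<xi> where "\<xi> \<in> {0..t}" "g t - g 0 = g' \<xi> * (t - 0)"
    using mvt_very_simple[OF \<open>0 \<le> t\<close>, of g "\<lambda>s h. g' s * h"] g_deriv by auto
  then have "g 0 \<le> g t"
    using g'_nonneg \<open>0 \<le> t\<close> by (metis diff_ge_0_iff_ge mult_nonneg_nonneg diff_zero)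
  then have "exp (- K * t) ^ 2 * (y 0 \<bullet> y 0) \<le> exp (- K * t) ^ 2 * (exp (2 * K * t) * (y t \<bullet> y t))"
    unfolding g_def by (intro mult_left_mono) auto
  also have "\<dots> = y t \<bullet> y t"
    by (simp add: exp_double[symmetric] mult.assoc[symmetric] exp_add[symmetric])
  finally have "(exp (- K * t) * norm (y 0))\<^sup>2 \<le> (norm (y t))\<^sup>2"
    by (simp add: power2_norm_eq_inner power_mult_distrib)
  then show ?thesis
    by (rule power2_le_imp_le) simp
qed

lemma matrix_inv_bounded_below:
  fixes A :: "real^'n^'n"
  assumes "0 < c" and below: "\<And>x. c * norm x \<le> norm (A *v x)"
  shows "A ** matrix_inv A = mat 1" and "matrix_inv A ** A = mat 1"
    and "c * norm (matrix_inv A *v z) \<le> norm z"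
proof -
  have "\<forall>x. A *v x = 0 \<longrightarrow> x = 0"
    using below \<open>0 < c\<close> by (metis mult_le_0_iff norm_eq_zero norm_ge_zero not_less order_antisym)
  then have "invertible A"
    using matrix_left_invertible_ker invertible_left_inverse by blast
  then have "A ** matrix_inv A = mat 1 \<and> matrix_inv A ** A = mat 1"
    unfolding invertible_def matrix_inv_def by (rule someI_ex)
  then show right: "A ** matrix_inv A = mat 1" and "matrix_inv A ** A = mat 1"
    by auto
  show "c * norm (matrix_inv A *v z) \<le> norm z"
    using below[of "matrix_inv A *v z"] by (simp add: matrix_vector_mul_assoc right)
qed

lemma tendsto_matrix_inv_bounded_below:
  fixes A :: "'a \<Rightarrow> real^'n^'n"
  assumes lim: "(A \<longlongrightarrow> A0) F" and "0 < c"
    and below0: "\<And>x. c * norm x \<le> norm (A0 *v x)"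
    and below: "\<forall>\<^sub>F s in F. \<forall>x. c * norm x \<le> norm (A s *v x)"
  shows "((\<lambda>s. matrix_inv (A s)) \<longlongrightarrow> matrix_inv A0) F"
proof -
  have vec: "((\<lambda>s. matrix_inv (A s) *v z) \<longlongrightarrow> matrix_inv A0 *v z) F" for z
  proof -
    define w where "w = matrix_inv A0 *v z"
    have z: "A0 *v w = z"
      unfolding w_def by (simp add: matrix_vector_mul_assoc matrix_inv_bounded_below(1)[OF \<open>0 < c\<close> below0])
    have "((\<lambda>s. A0 *v w - A s *v w) \<longlongrightarrow> A0 *v w - A0 *v w) F"
      by (intro tendsto_intros bounded_bilinear.tendsto[OF bounded_bilinear_matrix_vector_mult] lim)
    then have "((\<lambda>s. norm (A0 *v w - A s *v w) / c) \<longlongrightarrow> 0) F"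
      using tendsto_divide_zero tendsto_norm_zero by fastforce
    moreover have "\<forall>\<^sub>F s in F. norm (matrix_inv (A s) *v z - matrix_inv A0 *v z) \<le> norm (A0 *v w - A s *v w) / c"
      using below
    proof eventually_elim
      case (elim s)
      have "matrix_inv (A s) *v (A s *v w) = w"
        by (simp add: matrix_vector_mul_assoc matrix_inv_bounded_below(2)[OF \<open>0 < c\<close>] elim)
      then have "matrix_inv (A s) *v z - matrix_inv A0 *v z = matrix_inv (A s) *v (A0 *v w - A s *v w)"
        by (simp add: z w_def[symmetric] matrix_vector_mult_diff_distrib)
      then show ?case
        using matrix_inv_bounded_below(3)[OF \<open>0 < c\<close>, of "A s"] elim \<open>0 < c\<close>
        by (simp add: field_simps)
    qed
    ultimately have "((\<lambda>s. matrix_inv (A s) *v z - matrix_inv A0 *v z) \<longlongrightarrow> 0) F"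
      by (rule Lim_null_comparison[rotated])
    then show ?thesis
      by (simp add: Lim_null[symmetric])
  qed
  have entry: "(M *v axis j 1) $ i = M $ i $ j" for M :: "real^'n^'n" and i j
    by (simp add: matrix_vector_mult_def axis_def if_distrib cong: if_cong)
  show ?thesis
  proof (intro vec_tendstoI)
    fix i j
    show "((\<lambda>s. matrix_inv (A s) $ i $ j) \<longlongrightarrow> matrix_inv A0 $ i $ j) F"
      using tendsto_vec_nth[OF vec[of "axis j 1"], of i] by (simp add: entry)
  qed
qed

lemma has_vector_derivative_matrix_inv:
  fixes A :: "real \<Rightarrow> real^'n^'n"
  assumes deriv: "(A has_vector_derivative A') (at t within X)"
    and cont: "((\<lambda>s. matrix_inv (A s)) \<longlongrightarrow> matrix_inv (A t)) (at t within X)"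
    and left_inv: "\<And>s. s \<in> X \<Longrightarrow> matrix_inv (A s) ** A s = mat 1"
    and right_inv: "A t ** matrix_inv (A t) = mat 1"
  shows "((\<lambda>s. matrix_inv (A s)) has_vector_derivative
      - (matrix_inv (A t) ** A' ** matrix_inv (A t))) (at t within X)"
proof -
  let ?P = "\<lambda>s. matrix_inv (A s)"
  interpret mm: bounded_bilinear "(**) :: real^'n^'n \<Rightarrow> real^'n^'n \<Rightarrow> real^'n^'n"
    by (rule bounded_bilinear_matrix_matrix_mult)
  have "((\<lambda>s. - (?P s ** ((A s - A t) /\<^sub>R (s - t)) ** ?P t)) \<longlongrightarrow> - (?P t ** A' ** ?P t)) (at t within X)"
    using deriv unfolding has_vector_derivative_iff_difference_quotient
    by (intro tendsto_intros mm.tendsto cont)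
  moreover have "\<forall>\<^sub>F s in at t within X. - (?P s ** ((A s - A t) /\<^sub>R (s - t)) ** ?P t) = (?P s - ?P t) /\<^sub>R (s - t)"
  proof (rule eventually_at_filter[THEN iffD2], intro always_eventually allI impI)
    fix s assume "s \<in> X"
    have "?P s ** (A s - A t) ** ?P t = ?P t - ?P s"
      using left_inv[OF \<open>s \<in> X\<close>] right_inv
      by (simp add: mm.diff_left mm.diff_right matrix_mul_assoc[symmetric])
    then show "- (?P s ** ((A s - A t) /\<^sub>R (s - t)) ** ?P t) = (?P s - ?P t) /\<^sub>R (s - t)"
      by (simp only: mm.scaleR_left mm.scaleR_right scaleR_minus_right[symmetric] minus_diff_eq)
  qed
  ultimately show ?thesis
    unfolding has_vector_derivative_iff_difference_quotient by (rule Lim_transform_eventually)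
qed

lemma vstack_zero_right_bounded_linear: "bounded_linear (\<lambda>A::real^'c^'m. vstack A (0::real^'c^'n))"
  unfolding linear_conv_bounded_linear[symmetric] linear_iff
  by (auto simp: vstack_def vec_eq_iff split: sum.splits)

lemma vstack_zero_left_bounded_linear: "bounded_linear (\<lambda>C::real^'c^'n. vstack (0::real^'c^'m) C)"
  unfolding linear_conv_bounded_linear[symmetric] linear_iff
  by (auto simp: vstack_def vec_eq_iff split: sum.splits)

lemma vstack_vec_zero_left_bounded_linear: "bounded_linear (\<lambda>y::real^'n. vstack_vec (0::real^'m) y)"
  unfolding linear_conv_bounded_linear[symmetric] linear_iff
  by (auto simp: vstack_vec_def vec_eq_iff split: sum.splits)

lemma blockdiag_zero_left_bounded_linear: "bounded_linear (\<lambda>D::real^'n^'n. blockdiag (0::real^'m^'m) D)"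
  unfolding linear_conv_bounded_linear[symmetric] linear_iff
  by (auto simp: blockdiag_def vec_eq_iff split: sum.splits)

lemma vstack_add: "vstack (A + A') (C + C') = vstack A C + vstack A' C'"
  by (auto simp: vstack_def vec_eq_iff split: sum.splits)

lemma vstack_uminus: "vstack (- A) (- C) = - vstack A C"
  by (auto simp: vstack_def vec_eq_iff split: sum.splits)

lemma vstack_matrix_mult: "vstack A C ** M = vstack (A ** M) (C ** M)"
  by (auto simp: vstack_def matrix_matrix_mult_def vec_eq_iff split: sum.splits)

lemma vstack_matrix_vector_mult: "vstack A C *v x = vstack_vec (A *v x) (C *v x)"
  by (auto simp: vstack_def vstack_vec_def matrix_vector_mult_def vec_eq_iff split: sum.splits)

lemma vstack_zero_congruence:
  "vstack 0 C ** M ** transpose (vstack 0 C) = blockdiag 0 (C ** M ** transpose C)"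
  by (auto simp: vstack_def blockdiag_def transpose_def matrix_matrix_mult_def vec_eq_iff
      split: sum.splits)

lemma blockdiag_add: "blockdiag A D + blockdiag A' D' = blockdiag (A + A') (D + D')"
  for A A' :: "real^'m^'m" and D D' :: "real^'n^'n"
  by (auto simp: blockdiag_def vec_eq_iff split: sum.splits)

lemma has_vector_derivative_vstack:
  fixes f :: "real \<Rightarrow> real^'c^'m" and g :: "real \<Rightarrow> real^'c^'n"
  assumes "(f has_vector_derivative f') F" and "(g has_vector_derivative g') F"
  shows "((\<lambda>t. vstack (f t) (g t)) has_vector_derivative vstack f' g') F"
  using has_vector_derivative_add[OF
      bounded_linear.has_vector_derivative[OF vstack_zero_right_bounded_linear assms(1)]
      bounded_linear.has_vector_derivative[OF vstack_zero_left_bounded_linear assms(2)]]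
  by (simp add: vstack_add[symmetric])

lemma has_vector_derivative_integral_tail:
  fixes F :: "real \<Rightarrow> 'a::banach"
  assumes cont: "continuous_on {a..S} F" and int: "F integrable_on {S..T}"
    and "S \<le> T" and t: "t \<in> {a..S}"
  shows "((\<lambda>u. integral {u..T} F) has_vector_derivative - F t) (at t within {a..S})"
proof (rule has_vector_derivative_transform[OF t])
  show "((\<lambda>u. integral {u..S} F + integral {S..T} F) has_vector_derivative - F t) (at t within {a..S})"
    using has_vector_derivative_add[OF integral_has_vector_derivative'[OF cont t] has_vector_derivative_const]
    by simp
  fix u assume u: "u \<in> {a..S}"
  have "F integrable_on {u..S}"
    using integrable_continuous_interval[OF continuous_on_subset[OF cont]] u by auto
  then have "F integrable_on {u..T}"
    using Henstock_Kurzweil_Integration.integrable_combine[OF _ \<open>S \<le> T\<close> _ int] u by auto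
  then show "integral {u..T} F = integral {u..S} F + integral {S..T} F"
    using Henstock_Kurzweil_Integration.integral_combine[of u S T F] u \<open>S \<le> T\<close> by simp
qed

lemma integral_eq_linear_image_off_endpoint:
  fixes f :: "real \<Rightarrow> 'a::banach" and h :: "'a \<Rightarrow> 'b::banach"
  assumes h: "bounded_linear h" and f: "f integrable_on {S..T}"
    and g: "\<And>x. x \<in> {S<..T} \<Longrightarrow> g x = h (f x)"
  shows "g integrable_on {S..T}" and "integral {S..T} g = h (integral {S..T} f)"
proof -
  have eq: "g x = (h \<circ> f) x" if "x \<in> {S..T} - {S}" for x
  proof -
    have "x \<in> {S<..T}"
      using that by auto
    then show ?thesis
      by (simp add: g)
  qed
  show "g integrable_on {S..T}"
    by (rule integrable_spike_finite[of "{S}", OF _ eq integrable_linear[OF f h]]) simp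
  have "integral {S..T} g = integral {S..T} (h \<circ> f)"
    by (rule sym, rule integral_spike[OF negligible_sing], rule eq)
  also have "\<dots> = h (integral {S..T} f)"
    by (rule integral_linear[OF f h])
  finally show "integral {S..T} g = h (integral {S..T} f)" .
qed

lemma has_vector_derivative_tendsto_at_right:
  fixes f :: "real \<Rightarrow> 'a::real_normed_vector"
  assumes "(f has_vector_derivative f') (at S within {a..b})" and "a < S" and "S < b"
  shows "(f \<longlongrightarrow> f S) (at_right S)"
proof -
  have "(f \<longlongrightarrow> f S) (at S)"
    using has_vector_derivative_continuous[OF assms(1)] at_within_Icc_at[OF assms(2,3)]
    by (simp add: continuous_within)
  then show ?thesis
    by (rule tendsto_mono[rotated]) (simp add: at_le)
qed

locale fundamental_matrix =
  fixes \<Phi> B :: "real \<Rightarrow> real^'d^'d" and T :: real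
  assumes continuous_coefficient: "continuous_on {0..T} B"
    and ode: "\<And>t. t \<in> {0..T} \<Longrightarrow> (\<Phi> has_vector_derivative B t ** \<Phi> t) (at t within {0..T})"
    and initial: "\<Phi> 0 = mat 1"
begin

lemma bounded_below:
  obtains c where "0 < c" and "\<And>t x. t \<in> {0..T} \<Longrightarrow> c * norm x \<le> norm (\<Phi> t *v x)"
proof -
  obtain K where K: "\<And>t v. t \<in> {0..T} \<Longrightarrow> norm (B t *v v) \<le> K * norm v"
    using compact_continuous_matrix_bound[OF compact_Icc continuous_coefficient] by blast
  define K' where "K' = max 0 K"
  have "exp (- K' * T) * norm x \<le> norm (\<Phi> t *v x)" if t: "t \<in> {0..T}" for t x
  proof -
    have "exp (- K' * t) * norm (\<Phi> 0 *v x) \<le> norm (\<Phi> t *v x)"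
    proof (rule linear_growth_norm_lower_bound[where y' = "\<lambda>s. B s *v (\<Phi> s *v x)"])
      fix s assume "s \<in> {0..t}"
      then have s: "s \<in> {0..T}" and sub: "{0..t} \<subseteq> {0..T}"
        using t by auto
      have "((\<lambda>s. \<Phi> s *v x) has_vector_derivative (B s ** \<Phi> s) *v x) (at s within {0..T})"
        using bounded_linear.has_vector_derivative[OF bounded_bilinear.bounded_linear_left[OF
              bounded_bilinear_matrix_vector_mult] ode[OF s]] .
      then show "((\<lambda>s. \<Phi> s *v x) has_vector_derivative B s *v (\<Phi> s *v x)) (at s within {0..t})"
        by (simp add: matrix_vector_mul_assoc has_vector_derivative_within_subset[OF _ sub])
      have "K * norm (\<Phi> s *v x) \<le> K' * norm (\<Phi> s *v x)"
        unfolding K'_def by (intro mult_right_mono) auto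
      then show "norm (B s *v (\<Phi> s *v x)) \<le> K' * norm (\<Phi> s *v x)"
        using K[OF s] order_trans by blast
    qed (use t in auto)
    moreover have "exp (- K' * T) * norm x \<le> exp (- K' * t) * norm x"
      using t by (intro mult_right_mono) (auto simp: K'_def intro!: mult_left_mono)
    ultimately show ?thesis
      by (simp add: initial)
  qed
  then show ?thesis
    by (intro that[of "exp (- K' * T)"]) auto
qed

lemma matrix_inv_fundamental:
  assumes "t \<in> {0..T}"
  shows "\<Phi> t ** matrix_inv (\<Phi> t) = mat 1" and "matrix_inv (\<Phi> t) ** \<Phi> t = mat 1"
proof -
  obtain c where "0 < c" "\<And>x. c * norm x \<le> norm (\<Phi> t *v x)"
    using bounded_below assms by metis
  then show "\<Phi> t ** matrix_inv (\<Phi> t) = mat 1" and "matrix_inv (\<Phi> t) ** \<Phi> t = mat 1"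
    using matrix_inv_bounded_below by blast+
qed

lemma has_vector_derivative_inverse:
  assumes t: "t \<in> {0..T}"
  shows "((\<lambda>s. matrix_inv (\<Phi> s)) has_vector_derivative - (matrix_inv (\<Phi> t) ** B t)) (at t within {0..T})"
proof -
  obtain c where c: "0 < c" "\<And>s x. s \<in> {0..T} \<Longrightarrow> c * norm x \<le> norm (\<Phi> s *v x)"
    using bounded_below by blast
  have "((\<lambda>s. matrix_inv (\<Phi> s)) \<longlongrightarrow> matrix_inv (\<Phi> t)) (at t within {0..T})"
  proof (rule tendsto_matrix_inv_bounded_below[OF _ c(1) c(2)[OF t]])
    show "(\<Phi> \<longlongrightarrow> \<Phi> t) (at t within {0..T})"
      using has_vector_derivative_continuous[OF ode[OF t]] by (simp add: continuous_within)
    show "\<forall>\<^sub>F s in at t within {0..T}. \<forall>x. c * norm x \<le> norm (\<Phi> s *v x)"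
      using c(2) by (auto simp: eventually_at_filter)
  qed
  from has_vector_derivative_matrix_inv[OF ode[OF t] this matrix_inv_fundamental(2)
      matrix_inv_fundamental(1)[OF t]]
  show ?thesis
    using matrix_inv_fundamental(1)[OF t] by (simp add: matrix_mul_assoc[symmetric])
qed

lemma has_vector_derivative_Ltil_T:
  assumes "t \<in> {0..T}"
  shows "(Ltil_T L \<Phi> u has_vector_derivative - (Ltil_T L \<Phi> u t ** B t)) (at t within {0..T})"
  using bounded_linear.has_vector_derivative[OF bounded_bilinear.bounded_linear_right[OF
        bounded_bilinear_matrix_matrix_mult] has_vector_derivative_inverse[OF assms], of "L ** \<Phi> u"]
  by (simp add: Ltil_T_def[abs_def] trans_mat_def matrix_mul_assoc
      bounded_bilinear.minus_right[OF bounded_bilinear_matrix_matrix_mult])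

lemma continuous_on_Ltil_T: "continuous_on {0..T} (Ltil_T L \<Phi> u)"
  by (rule differentiable_imp_continuous_on)
    (auto simp: differentiable_on_def intro: differentiableI_vector has_vector_derivative_Ltil_T)

lemma Ltil_T_diagonal: "t \<in> {0..T} \<Longrightarrow> Ltil_T L \<Phi> t t = L"
  by (simp add: Ltil_T_def trans_mat_def matrix_inv_fundamental)

end

locale backward_equations = fundamental_matrix \<Phi> B T
  for \<Phi> B :: "real \<Rightarrow> real^'d^'d" and T :: real +
  fixes S :: real and \<beta> :: "real \<Rightarrow> real^'d" and a :: "real \<Rightarrow> real^'d^'d"
  assumes S_bounds: "0 < S" "S < T"
    and continuous_drift: "continuous_on {0..T} \<beta>"
    and continuous_diffusion: "continuous_on {0..T} a"
begin

lemma continuous_on_Mdag_T_integrand: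
  "continuous_on {0..T} (\<lambda>\<tau>. Ltil_T L \<Phi> T \<tau> ** a \<tau> ** transpose (Ltil_T L \<Phi> T \<tau>))"
  by (intro continuous_intros continuous_on_Ltil_T continuous_diffusion)

lemma continuous_on_mu_T_integrand: "continuous_on {0..T} (\<lambda>\<tau>. Ltil_T L \<Phi> T \<tau> *v \<beta> \<tau>)"
  by (intro continuous_intros continuous_on_Ltil_T continuous_drift)

lemma has_vector_derivative_Mdag_T:
  assumes "t \<in> {0..T}"
  shows "(Mdag_T L \<Phi> a \<Sigma> T has_vector_derivative
      - (Ltil_T L \<Phi> T t ** a t ** transpose (Ltil_T L \<Phi> T t))) (at t within {0..T})"
  using has_vector_derivative_add[OF integral_has_vector_derivative'[OF
        continuous_on_Mdag_T_integrand assms] has_vector_derivative_const]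
  by (simp add: Mdag_T_def[abs_def])

lemma has_vector_derivative_mu_T:
  assumes "t \<in> {0..T}"
  shows "(mu_T L \<Phi> \<beta> T has_vector_derivative - (Ltil_T L \<Phi> T t *v \<beta> t)) (at t within {0..T})"
  using integral_has_vector_derivative'[OF continuous_on_mu_T_integrand assms]
  by (simp add: mu_T_def[abs_def])

lemma Ltil_S_left:
  "t \<in> {0..S} \<Longrightarrow> Ltil_S LmS LmT \<Phi> S T t = vstack (Ltil_T LmS \<Phi> S t) (Ltil_T LmT \<Phi> T t)"
  by (simp add: Ltil_S_def Ltil_T_def)

lemma Ltil_S_right: "t \<in> {S<..T} \<Longrightarrow> Ltil_S LmS LmT \<Phi> S T t = vstack 0 (Ltil_T LmT \<Phi> T t)"
  by (simp add: Ltil_S_def)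

lemma Ltil_S_at_S: "Ltil_S LmS LmT \<Phi> S T S = vstack LmS (Ltil_T LmT \<Phi> T S)"
  using S_bounds by (simp add: Ltil_S_left Ltil_T_diagonal)

lemma has_vector_derivative_Ltil_S:
  assumes t: "t \<in> {0..S}"
  shows "(Ltil_S LmS LmT \<Phi> S T has_vector_derivative - (Ltil_S LmS LmT \<Phi> S T t ** B t))
    (at t within {0..S})"
proof -
  have sub: "{0..S} \<subseteq> {0..T}"
    using S_bounds by auto
  have deriv: "((\<lambda>s. vstack (Ltil_T LmS \<Phi> S s) (Ltil_T LmT \<Phi> T s)) has_vector_derivative
      vstack (- (Ltil_T LmS \<Phi> S t ** B t)) (- (Ltil_T LmT \<Phi> T t ** B t))) (at t within {0..S})"
    using t sub by (intro has_vector_derivative_vstack has_vector_derivative_within_subset[OF _ sub]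
        has_vector_derivative_Ltil_T) auto
  have "(Ltil_S LmS LmT \<Phi> S T has_vector_derivative
      vstack (- (Ltil_T LmS \<Phi> S t ** B t)) (- (Ltil_T LmT \<Phi> T t ** B t))) (at t within {0..S})"
    by (rule has_vector_derivative_transform[OF t _ deriv]) (simp add: Ltil_S_left)
  then show ?thesis
    using t by (simp add: Ltil_S_left vstack_uminus vstack_matrix_mult)
qed

lemma continuous_on_Ltil_S: "continuous_on {0..S} (Ltil_S LmS LmT \<Phi> S T)"
  by (rule differentiable_imp_continuous_on)
    (auto simp: differentiable_on_def intro: differentiableI_vector has_vector_derivative_Ltil_S)

lemma Mdag_S_integrand_tail:
  "(\<lambda>\<tau>. Ltil_S LmS LmT \<Phi> S T \<tau> ** a \<tau> ** transpose (Ltil_S LmS LmT \<Phi> S T \<tau>)) integrable_on {S..T}"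
  "integral {S..T} (\<lambda>\<tau>. Ltil_S LmS LmT \<Phi> S T \<tau> ** a \<tau> ** transpose (Ltil_S LmS LmT \<Phi> S T \<tau>)) =
    blockdiag 0 (integral {S..T} (\<lambda>\<tau>. Ltil_T LmT \<Phi> T \<tau> ** a \<tau> ** transpose (Ltil_T LmT \<Phi> T \<tau>)))"
proof -
  have integrable: "(\<lambda>\<tau>. Ltil_T LmT \<Phi> T \<tau> ** a \<tau> ** transpose (Ltil_T LmT \<Phi> T \<tau>)) integrable_on {S..T}"
    using S_bounds by (intro integrable_continuous_interval continuous_on_subset[OF
          continuous_on_Mdag_T_integrand]) auto
  have tail: "Ltil_S LmS LmT \<Phi> S T \<tau> ** a \<tau> ** transpose (Ltil_S LmS LmT \<Phi> S T \<tau>) =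
      blockdiag 0 (Ltil_T LmT \<Phi> T \<tau> ** a \<tau> ** transpose (Ltil_T LmT \<Phi> T \<tau>))"
    if "\<tau> \<in> {S<..T}" for \<tau>
    using that by (simp add: Ltil_S_right vstack_zero_congruence)
  show "(\<lambda>\<tau>. Ltil_S LmS LmT \<Phi> S T \<tau> ** a \<tau> ** transpose (Ltil_S LmS LmT \<Phi> S T \<tau>)) integrable_on {S..T}"
    "integral {S..T} (\<lambda>\<tau>. Ltil_S LmS LmT \<Phi> S T \<tau> ** a \<tau> ** transpose (Ltil_S LmS LmT \<Phi> S T \<tau>)) =
      blockdiag 0 (integral {S..T} (\<lambda>\<tau>. Ltil_T LmT \<Phi> T \<tau> ** a \<tau> ** transpose (Ltil_T LmT \<Phi> T \<tau>)))"
    using integral_eq_linear_image_off_endpoint[OF blockdiag_zero_left_bounded_linear integrable tail] by simp_all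
qed

lemma mu_S_integrand_tail:
  "(\<lambda>\<tau>. Ltil_S LmS LmT \<Phi> S T \<tau> *v \<beta> \<tau>) integrable_on {S..T}"
  "integral {S..T} (\<lambda>\<tau>. Ltil_S LmS LmT \<Phi> S T \<tau> *v \<beta> \<tau>) =
    vstack_vec 0 (integral {S..T} (\<lambda>\<tau>. Ltil_T LmT \<Phi> T \<tau> *v \<beta> \<tau>))"
proof -
  have integrable: "(\<lambda>\<tau>. Ltil_T LmT \<Phi> T \<tau> *v \<beta> \<tau>) integrable_on {S..T}"
    using S_bounds by (intro integrable_continuous_interval continuous_on_subset[OF
          continuous_on_mu_T_integrand]) auto
  have tail: "Ltil_S LmS LmT \<Phi> S T \<tau> *v \<beta> \<tau> = vstack_vec 0 (Ltil_T LmT \<Phi> T \<tau> *v \<beta> \<tau>)"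
    if "\<tau> \<in> {S<..T}" for \<tau>
    using that by (simp add: Ltil_S_right vstack_matrix_vector_mult)
  show "(\<lambda>\<tau>. Ltil_S LmS LmT \<Phi> S T \<tau> *v \<beta> \<tau>) integrable_on {S..T}"
    "integral {S..T} (\<lambda>\<tau>. Ltil_S LmS LmT \<Phi> S T \<tau> *v \<beta> \<tau>) =
      vstack_vec 0 (integral {S..T} (\<lambda>\<tau>. Ltil_T LmT \<Phi> T \<tau> *v \<beta> \<tau>))"
    using integral_eq_linear_image_off_endpoint[OF vstack_vec_zero_left_bounded_linear integrable tail] by simp_all
qed

lemma has_vector_derivative_Mdag_S:
  assumes "t \<in> {0..S}"
  shows "(Mdag_S LmS LmT \<Phi> a \<Sigma>S \<Sigma>T S T has_vector_derivative
      - (Ltil_S LmS LmT \<Phi> S T t ** a t ** transpose (Ltil_S LmS LmT \<Phi> S T t))) (at t within {0..S})"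
proof -
  have "continuous_on {0..S}
      (\<lambda>\<tau>. Ltil_S LmS LmT \<Phi> S T \<tau> ** a \<tau> ** transpose (Ltil_S LmS LmT \<Phi> S T \<tau>))"
    using S_bounds by (intro continuous_intros continuous_on_Ltil_S
        continuous_on_subset[OF continuous_diffusion]) auto
  from has_vector_derivative_add[OF has_vector_derivative_integral_tail[OF this
        Mdag_S_integrand_tail(1) _ assms] has_vector_derivative_const]
  show ?thesis
    using S_bounds by (simp add: Mdag_S_def[abs_def])
qed

lemma has_vector_derivative_mu_S:
  assumes "t \<in> {0..S}"
  shows "(mu_S LmS LmT \<Phi> \<beta> S T has_vector_derivative - (Ltil_S LmS LmT \<Phi> S T t *v \<beta> t))
    (at t within {0..S})"
proof -
  have "continuous_on {0..S} (\<lambda>\<tau>. Ltil_S LmS LmT \<Phi> S T \<tau> *v \<beta> \<tau>)"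
    using S_bounds by (intro continuous_intros continuous_on_Ltil_S
        continuous_on_subset[OF continuous_drift]) auto
  from has_vector_derivative_integral_tail[OF this mu_S_integrand_tail(1) _ assms]
  show ?thesis
    using S_bounds by (simp add: mu_S_def[abs_def])
qed

lemma Mdag_S_at_S: "Mdag_S LmS LmT \<Phi> a \<Sigma>S \<Sigma>T S T S = blockdiag \<Sigma>S (Mdag_T LmT \<Phi> a \<Sigma>T T S)"
  by (simp add: Mdag_S_def Mdag_T_def Mdag_S_integrand_tail(2) blockdiag_add)

lemma mu_S_at_S: "mu_S LmS LmT \<Phi> \<beta> S T S = vstack_vec 0 (mu_T LmT \<Phi> \<beta> T S)"
  by (simp add: mu_S_def mu_T_def mu_S_integrand_tail(2))

end

theorem lemma1:
  fixes S T :: real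
    and \<beta> :: "real \<Rightarrow> real^'d"
    and B :: "real \<Rightarrow> real^'d^'d"
    and \<sigma> :: "real \<Rightarrow> real^'d'^'d"
    and a :: "real \<Rightarrow> real^'d^'d"
    and \<Phi> :: "real \<Rightarrow> real^'d^'d"
    and LmS :: "real^'d^'mS" and LmT :: "real^'d^'mT"
    and \<Sigma>S :: "real^'mS^'mS" and \<Sigma>T :: "real^'mT^'mT"
  assumes "0 < S" and "S < T"
    and "continuous_on {0..T} \<beta>" and "continuous_on {0..T} B" and "continuous_on {0..T} \<sigma>"
    and a_def: "\<And>t. a t = \<sigma> t ** transpose (\<sigma> t)"
    and "sym_posdef \<Sigma>S" and "sym_posdef \<Sigma>T"
    and Phi_ode: "\<And>t. t \<in> {0..T} \<Longrightarrow> (\<Phi> has_vector_derivative (B t ** \<Phi> t)) (at t within {0..T})"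
    and Phi0: "\<Phi> 0 = mat 1"
  shows
    "(\<forall>t\<in>{S<..T}.
        (Ltil_T LmT \<Phi> T has_vector_derivative - (Ltil_T LmT \<Phi> T t ** B t)) (at t within {S<..T})
      \<and> (Mdag_T LmT \<Phi> a \<Sigma>T T has_vector_derivative
           - (Ltil_T LmT \<Phi> T t ** a t ** transpose (Ltil_T LmT \<Phi> T t))) (at t within {S<..T})
      \<and> (mu_T LmT \<Phi> \<beta> T has_vector_derivative - (Ltil_T LmT \<Phi> T t *v \<beta> t)) (at t within {S<..T}))
   \<and> Ltil_T LmT \<Phi> T T = LmT \<and> Mdag_T LmT \<Phi> a \<Sigma>T T T = \<Sigma>T \<and> mu_T LmT \<Phi> \<beta> T T = 0
   \<and> (\<forall>t\<in>{0..S}.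
        (Ltil_S LmS LmT \<Phi> S T has_vector_derivative - (Ltil_S LmS LmT \<Phi> S T t ** B t)) (at t within {0..S})
      \<and> (Mdag_S LmS LmT \<Phi> a \<Sigma>S \<Sigma>T S T has_vector_derivative
           - (Ltil_S LmS LmT \<Phi> S T t ** a t ** transpose (Ltil_S LmS LmT \<Phi> S T t))) (at t within {0..S})
      \<and> (mu_S LmS LmT \<Phi> \<beta> S T has_vector_derivative - (Ltil_S LmS LmT \<Phi> S T t *v \<beta> t)) (at t within {0..S}))
   \<and> (\<exists>L M m.
        (Ltil_T LmT \<Phi> T \<longlongrightarrow> L) (at_right S)
      \<and> (Mdag_T LmT \<Phi> a \<Sigma>T T \<longlongrightarrow> M) (at_right S)
      \<and> (mu_T LmT \<Phi> \<beta> T \<longlongrightarrow> m) (at_right S)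
      \<and> Ltil_S LmS LmT \<Phi> S T S = vstack LmS L
      \<and> Mdag_S LmS LmT \<Phi> a \<Sigma>S \<Sigma>T S T S = blockdiag \<Sigma>S M
      \<and> mu_S LmS LmT \<Phi> \<beta> S T S = vstack_vec 0 m)"
proof -
  have "a = (\<lambda>t. \<sigma> t ** transpose (\<sigma> t))"
    using a_def by blast
  then have "continuous_on {0..T} a"
    using assms(5) by (simp add: continuous_intros)
  then interpret backward_equations \<Phi> B T S \<beta> a
    using assms by unfold_locales auto
  have right_part: "{S<..T} \<subseteq> {0..T}" and S: "S \<in> {0..T}" and T: "T \<in> {0..T}"
    using assms(1,2) by auto
  have "Mdag_T LmT \<Phi> a \<Sigma>T T T = \<Sigma>T" and "mu_T LmT \<Phi> \<beta> T T = 0"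
    by (simp_all add: Mdag_T_def mu_T_def)
  \<comment> \<open>The right limits at \<open>S\<close> are the values at \<open>S\<close> of the quantities defined on all of \<open>[0,T]\<close>.\<close>
  then show ?thesis
    using right_part S T
    by (intro conjI ballI exI)
      (auto intro: has_vector_derivative_within_subset[OF has_vector_derivative_Ltil_T right_part]
        has_vector_derivative_within_subset[OF has_vector_derivative_Mdag_T right_part]
        has_vector_derivative_within_subset[OF has_vector_derivative_mu_T right_part]
        has_vector_derivative_tendsto_at_right[OF has_vector_derivative_Ltil_T[OF S] assms(1,2)]
        has_vector_derivative_tendsto_at_right[OF has_vector_derivative_Mdag_T[OF S] assms(1,2)]
        has_vector_derivative_tendsto_at_right[OF has_vector_derivative_mu_T[OF S] assms(1,2)]
        has_vector_derivative_Ltil_S has_vector_derivative_Mdag_S has_vector_derivative_mu_S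
        simp: Ltil_T_diagonal Ltil_S_at_S Mdag_S_at_S mu_S_at_S)
qed

end
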